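(* For every integer $n\ge 3$, the prism graph $GP(n,1)$ is odd prime.
   Context: All graphs are finite and simple. A graph $G$ of order $N$ is odd prime if there is a bijection $\ell:V(G)\to\{1,3,\ldots,2N-1\}$ with $\gcd(\ell(u),\ell(v))=1$ for every edge $uv$. The prism graph $GP(n,1)$ has vertices $u_1,\ldots,u_n,v_1,\ldots,v_n$ and edges $u_iu_{i+1}$, $v_iv_{i+1}$ for $1\le i\le n-1$, $u_nu_1$, $v_nv_1$, and $u_iv_i$ for $1\le i\le n$. *)

theory Defs
  imports Main
begin

definition simple_graph :: "'a set \<Rightarrow> 'a set set \<Rightarrow> bool" where
  "simple_graph V E \<longleftrightarrow> finite V \<and> (\<forall>e\<in>E. e \<subseteq> V \<and> card e = 2)"

definition odd_prime_labeling :: "'a set \<Rightarrow> 'a set set \<Rightarrow> ('a \<Rightarrow> nat) \<Rightarrow> bool" where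
  "odd_prime_labeling V E l \<longleftrightarrow>
     bij_betw l V {k. odd k \<and> k \<le> 2 * card V - 1} \<and>
     (\<forall>u v. {u, v} \<in> E \<longrightarrow> gcd (l u) (l v) = 1)"

definition odd_prime :: "'a set \<Rightarrow> 'a set set \<Rightarrow> bool" where
  "odd_prime V E \<longleftrightarrow> (\<exists>l. odd_prime_labeling V E l)"

text \<open>Prism graph GP(n,1). Vertex u_i is Inl (i-1), v_i is Inr (i-1), for
i = 1..n; indices are taken mod n (so the edge u_n u_1 is u_{n-1} u_0 here).\<close>

definition prism_vertices :: "nat \<Rightarrow> (nat + nat) set" where
  "prism_vertices n = Inl ` {0..<n} \<union> Inr ` {0..<n}"

definition prism_edges :: "nat \<Rightarrow> (nat + nat) set set" where
  "prism_edges n =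
     (\<lambda>i. {Inl i, Inl (Suc i mod n)}) ` {0..<n} \<union>
     (\<lambda>i. {Inr i, Inr (Suc i mod n)}) ` {0..<n} \<union>
     (\<lambda>i. {Inl i, Inr i}) ` {0..<n}"

end

theory Submission
  imports Defs "HOL-Computational_Algebra.Primes"
begin

text \<open>Number u_i with 4i + 1 and v_i with 4i + 3 (i = 0, ..., n - 1). Along both
cycles and on every spoke the two labels of an edge differ by 2 or 4, and odd numbers
differing by a power of two are coprime. The closing edges carry the labels 4n - 3, 1 and
4n - 1, 3; the latter fails exactly when n \<equiv> 1 (mod 3), and in that case exchanging the
labels of u_0 and v_0 repairs it, because then 3 divides neither 4n - 3 nor 5.\<close>

lemma coprime_odd_add_power2:
  fixes a b :: nat
  assumes "odd a" and "b = a + 2 ^ k"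
  shows "coprime a b"
proof -
  have "coprime a (2 ^ k)"
    using assms(1) by simp
  then show ?thesis
    using assms(2) by (simp add: coprime_iff_gcd_eq_1)
qed

lemma coprime_prime_right_iff:
  fixes p :: "'a :: factorial_semiring_gcd"
  assumes "prime p"
  shows "coprime m p \<longleftrightarrow> \<not> p dvd m"
  using assms prime_imp_coprime [of p m] not_prime_unit coprime_common_divisor [of m p p]
  by (auto simp: coprime_commute)

lemma card_odd_atMost: "card {k :: nat. odd k \<and> k \<le> 2 * N - 1} = N"
proof -
  have "{k :: nat. odd k \<and> k \<le> 2 * N - 1} = (\<lambda>j. 2 * j + 1) ` {..<N}"
    by (auto elim!: oddE)
  then show ?thesis
    by (simp add: card_image inj_on_def)
qed

lemma odd_prime_labelingI:
  assumes "finite V" and "inj_on l V"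
    and "l ` V \<subseteq> {k. odd k \<and> k \<le> 2 * card V - 1}"
    and "\<And>u v. {u, v} \<in> E \<Longrightarrow> coprime (l u) (l v)"
  shows "odd_prime_labeling V E l"
proof -
  have "card (l ` V) = card {k. odd k \<and> k \<le> 2 * card V - 1}"
    using assms(2) card_odd_atMost [of "card V"] by (simp add: card_image)
  then have "l ` V = {k. odd k \<and> k \<le> 2 * card V - 1}"
    using assms(3) by (intro card_subset_eq) auto
  then show ?thesis
    using assms(2,4) by (simp add: odd_prime_labeling_def bij_betw_def coprime_iff_gcd_eq_1)
qed

lemma finite_prism_vertices: "finite (prism_vertices n)"
  by (simp add: prism_vertices_def)

lemma card_prism_vertices: "card (prism_vertices n) = 2 * n"
  unfolding prism_vertices_def
  by (subst card_Un_disjoint) (auto simp: card_image)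

fun prism_label :: "nat \<Rightarrow> nat + nat \<Rightarrow> nat" where
  "prism_label n (Inl i) = (if i = 0 \<and> n mod 3 = 1 then 3 else 4 * i + 1)"
| "prism_label n (Inr i) = (if i = 0 \<and> n mod 3 = 1 then 1 else 4 * i + 3)"

lemma inj_prism_label: "inj (prism_label n)"
proof (rule injI)
  fix x y
  assume eq: "prism_label n x = prism_label n y"
  have index_Inl: "prism_label n (Inl i) div 4 = i" for i
    by simp presburger
  have index_Inr: "prism_label n (Inr i) div 4 = i" for i
    by simp
  have side: "prism_label n (Inl i) \<noteq> prism_label n (Inr i)" for i
    by simp
  show "x = y"
    using eq index_Inl index_Inr side by (cases x; cases y) metis+
qed

lemma prism_label_range:
  "prism_label n ` prism_vertices n \<subseteq> {k. odd k \<and> k \<le> 2 * card (prism_vertices n) - 1}"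
  unfolding card_prism_vertices unfolding prism_vertices_def by (auto split: if_splits)

lemma coprime_prism_label_spoke: "coprime (prism_label n (Inl i)) (prism_label n (Inr i))"
  by (auto intro: coprime_odd_add_power2 [where k = 1])

lemma coprime_prism_label_outer:
  assumes "n \<ge> 3" and "i < n"
  shows "coprime (prism_label n (Inl i)) (prism_label n (Inl (Suc i mod n)))"
proof (cases "Suc i < n")
  case True
  then show ?thesis
    by (auto intro: coprime_odd_add_power2 [where k = 1] coprime_odd_add_power2 [where k = 2])
next
  case False
  with assms have i: "i = n - 1" "i \<noteq> 0" and "Suc i = n"
    by auto
  then have wrap: "Suc i mod n = 0"
    by simp
  show ?thesis
  proof (cases "n mod 3 = 1")
    case True
    then have "\<not> 3 dvd 4 * i + 1"
      using i assms(1) by presburger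
    with True i wrap show ?thesis
      by (simp add: coprime_prime_right_iff)
  next
    case False
    with i wrap show ?thesis
      by simp
  qed
qed

lemma coprime_prism_label_inner:
  assumes "n \<ge> 3" and "i < n"
  shows "coprime (prism_label n (Inr i)) (prism_label n (Inr (Suc i mod n)))"
proof (cases "Suc i < n")
  case True
  then show ?thesis
    by (auto intro: coprime_odd_add_power2 [where k = 2])
next
  case False
  with assms have i: "i = n - 1" "i \<noteq> 0" and "Suc i = n"
    by auto
  then have wrap: "Suc i mod n = 0"
    by simp
  show ?thesis
  proof (cases "n mod 3 = 1")
    case True
    with i wrap show ?thesis
      by simp
  next
    case False
    then have "\<not> 3 dvd 4 * i + 3"
      using i assms(1) by presburger
    with False i wrap show ?thesis
      by (simp add: coprime_prime_right_iff)
  qed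
qed

lemma coprime_prism_label_edge:
  assumes "n \<ge> 3" and "{x, y} \<in> prism_edges n"
  shows "coprime (prism_label n x) (prism_label n y)"
proof -
  from assms(2) consider
      (outer) i where "i < n" "{x, y} = {Inl i, Inl (Suc i mod n)}"
    | (inner) i where "i < n" "{x, y} = {Inr i, Inr (Suc i mod n)}"
    | (spoke) i where "{x, y} = {Inl i, Inr i}"
    unfolding prism_edges_def by auto
  then show ?thesis
  proof cases
    case outer
    then show ?thesis
      using coprime_prism_label_outer [OF assms(1)] by (auto simp: doubleton_eq_iff coprime_commute)
  next
    case inner
    then show ?thesis
      using coprime_prism_label_inner [OF assms(1)] by (auto simp: doubleton_eq_iff coprime_commute)
  next
    case spoke
    then show ?thesis
      using coprime_prism_label_spoke by (auto simp: doubleton_eq_iff coprime_commute)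
  qed
qed

theorem theorem3p5:
  fixes n :: nat
  assumes "n \<ge> 3"
  shows "odd_prime (prism_vertices n) (prism_edges n)"
proof -
  have "inj_on (prism_label n) (prism_vertices n)"
    using inj_prism_label by (rule inj_on_subset) simp
  with finite_prism_vertices
  have "odd_prime_labeling (prism_vertices n) (prism_edges n) (prism_label n)"
    using prism_label_range coprime_prism_label_edge [OF assms] by (rule odd_prime_labelingI)
  then show ?thesis
    unfolding odd_prime_def by blast
qed

end
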